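(* Fix a nondegenerate triangle $E=E_1E_2E_3$ in the real affine plane. Parallel triangles (triangles $D=D_1D_2D_3$ with $D_iD_j\parallel E_iE_j$) are identified, via their barycentric coordinates $(\delta_1,\delta_2,\delta_3)$, with the points of $\mathbb{R}^3$ with $\delta_1+\delta_2+\delta_3\neq 0$; the space of triangles is $\mathbb{R}^3$, i.e. this set extended by formal elements with $\delta_1+\delta_2+\delta_3=0$. Then the operation $+$ on parallel triangles extends to a commutative and associative operation on the space of triangles, and the resulting group is isomorphic to the additive group $\mathbb{R}^3$.
   Context: Here $d=\delta_1+\delta_2+\delta_3$ is the unique nonzero real such that the homothety of ratio $d$ (translation if $d=1$) maps $D_i$ to $E_i$, and $\delta_i/d$ are the barycentric coordinates (with respect to $E$) of the centroid of $D$. For parallel triangles $A,B$, the pre-sum $C=A\boxplus B$ has vertices $C_k=A_iB_j\cap A_jB_i$ for each permutation $(i,j,k)$ of $(1,2,3)$, and $A+B$ is the point reflection of $C$ in its centroid (defined when $C$ is a nondegenerate triangle in the affine plane). *)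

theory Defs
  imports "HOL-Analysis.Analysis"
begin

text \<open>Points of the real affine plane are vectors in real^2; a triangle is a
  triple of points indexed by the 3-element type 3 (vertices T$1, T$2, T$3).\<close>
type_synonym triangle = "real^2^3"

definition nondeg_tri :: "triangle \<Rightarrow> bool" where
  "nondeg_tri T \<longleftrightarrow> \<not> collinear (range (vec_nth T))"

definition parallel_tri :: "triangle \<Rightarrow> triangle \<Rightarrow> bool" where
  "parallel_tri E D \<longleftrightarrow> nondeg_tri D \<and>
     (\<forall>i j. \<exists>s::real. D$i - D$j = s *\<^sub>R (E$i - E$j))"

definition tri_ratio :: "triangle \<Rightarrow> triangle \<Rightarrow> real" where
  "tri_ratio E D = (THE d. d \<noteq> 0 \<and> (\<exists>w. \<forall>i. E$i = d *\<^sub>R D$i + w))"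

definition centroid :: "triangle \<Rightarrow> real^2" where
  "centroid T = (1/3) *\<^sub>R (\<Sum>i\<in>UNIV. T$i)"

definition bary :: "triangle \<Rightarrow> real^2 \<Rightarrow> real^3" where
  "bary E p = (THE l. (\<Sum>i\<in>UNIV. l$i) = 1 \<and> (\<Sum>i\<in>UNIV. l$i *\<^sub>R E$i) = p)"

definition tri_delta :: "triangle \<Rightarrow> triangle \<Rightarrow> real^3" where
  "tri_delta E D = tri_ratio E D *\<^sub>R bary E (centroid D)"

definition line :: "real^2 \<Rightarrow> real^2 \<Rightarrow> (real^2) set" where
  "line p q = {p + t *\<^sub>R (q - p) | t. True}"

definition is_presum :: "triangle \<Rightarrow> triangle \<Rightarrow> triangle \<Rightarrow> bool" where
  "is_presum A B C \<longleftrightarrow> (\<forall>i j k. distinct [i, j, k] \<longrightarrow>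
      A$i \<noteq> B$j \<and> A$j \<noteq> B$i \<and> line (A$i) (B$j) \<inter> line (A$j) (B$i) = {C$k})"

definition is_tri_sum :: "triangle \<Rightarrow> triangle \<Rightarrow> triangle \<Rightarrow> bool" where
  "is_tri_sum A B S \<longleftrightarrow> (\<exists>C. is_presum A B C \<and> nondeg_tri C \<and>
      S = (\<chi> k. 2 *\<^sub>R centroid C - C$k))"

end

theory Submission
  imports Defs
begin

(* A triangle D parallel to E is mapped onto E by a homothety x |-> d x + w, and its
   coordinates delta are the unique weights (the vertices of E being affinely independent)
   with sum_i delta_i = d and sum_i delta_i E_i = centroid E - w. If A and B have homothety
   data (d_A, w_A) and (d_B, w_B), the weighted point (d_A A_i + d_B B_j) / (d_A + d_B) is
   symmetric in i and j, hence it is the vertex C_k of the pre-sum. Reflecting C in its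
   centroid gives a triangle S that is mapped onto E with ratio d_A + d_B and translation
   w_A + w_B - centroid E, so delta(S) = delta(A) + delta(B): the operation is plain vector
   addition on R^3. *)

lemma range_vec_nth_3: "range (vec_nth (T::'a^3)) = {T$1, T$2, T$3}"
  by (auto simp: UNIV_3)

lemma nondeg_tri_distinct:
  "nondeg_tri T \<Longrightarrow> T$1 \<noteq> T$2 \<and> T$1 \<noteq> T$3 \<and> T$2 \<noteq> T$3"
  unfolding nondeg_tri_def range_vec_nth_3 by (auto simp: collinear_3_eq_affine_dependent)

lemma nondeg_tri_inj: "nondeg_tri T \<Longrightarrow> inj (vec_nth T)"
  using nondeg_tri_distinct[of T] unfolding inj_def by (auto simp: forall_3)

lemma nondeg_tri_affine_independent:
  "nondeg_tri T \<Longrightarrow> \<not> affine_dependent (range (vec_nth T))"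
  unfolding nondeg_tri_def range_vec_nth_3 by (simp add: collinear_3_eq_affine_dependent)

lemma sum_range_vec_nth:
  "inj (vec_nth T) \<Longrightarrow> (\<Sum>p\<in>range (vec_nth T). f p) = (\<Sum>i\<in>UNIV. f (T$i))"
  by (simp add: sum.reindex)

lemma affine_independent_weights_eq_0:
  fixes T :: "'a::real_vector^'n" and l :: "real^'n"
  assumes inj: "inj (vec_nth T)" and indep: "\<not> affine_dependent (range (vec_nth T))"
    and "(\<Sum>i\<in>UNIV. l$i) = 0" "(\<Sum>i\<in>UNIV. l$i *\<^sub>R T$i) = 0"
  shows "l = 0"
proof -
  define U where "U p = l $ inv (vec_nth T) p" for p
  have U: "U (T$i) = l$i" for i
    unfolding U_def using inj by simp
  have "sum U (range (vec_nth T)) = 0" "(\<Sum>p\<in>range (vec_nth T). U p *\<^sub>R p) = 0"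
    using assms(3,4) by (simp_all add: sum_range_vec_nth[OF inj] U)
  then have "\<forall>p\<in>range (vec_nth T). U p = 0"
    using indep affine_dependent_explicit_finite[of "range (vec_nth T)"] by auto
  then show ?thesis
    by (simp add: vec_eq_iff U)
qed

lemma affine_independent_weights_unique:
  fixes T :: "'a::real_vector^'n" and l m :: "real^'n"
  assumes "inj (vec_nth T)" "\<not> affine_dependent (range (vec_nth T))"
    and "(\<Sum>i\<in>UNIV. l$i) = (\<Sum>i\<in>UNIV. m$i)"
    and "(\<Sum>i\<in>UNIV. l$i *\<^sub>R T$i) = (\<Sum>i\<in>UNIV. m$i *\<^sub>R T$i)"
  shows "l = m"
  using affine_independent_weights_eq_0[OF assms(1,2), of "l - m"] assms(3,4)
  by (simp add: sum_subtractf scaleR_diff_left)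

lemma nondeg_tri_affine_hull:
  assumes "nondeg_tri T"
  shows "affine hull (range (vec_nth T)) = UNIV"
proof -
  have "card (range (vec_nth T)) = 3"
    using nondeg_tri_inj[OF assms] by (simp add: card_image)
  then have "aff_dim (range (vec_nth T)) = 2"
    using aff_dim_affine_independent[OF nondeg_tri_affine_independent[OF assms]] by simp
  then show ?thesis
    using aff_dim_eq_full by fastforce
qed

lemma bary_exists:
  assumes "nondeg_tri E"
  shows "\<exists>l::real^3. (\<Sum>i\<in>UNIV. l$i) = 1 \<and> (\<Sum>i\<in>UNIV. l$i *\<^sub>R E$i) = p"
proof -
  have "p \<in> affine hull (range (vec_nth E))"
    using nondeg_tri_affine_hull[OF assms] by simp
  then obtain U where "sum U (range (vec_nth E)) = 1" "(\<Sum>q\<in>range (vec_nth E). U q *\<^sub>R q) = p"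
    by (auto simp: affine_hull_finite)
  then show ?thesis
    by (intro exI[of _ "\<chi> i. U (E$i)"]) (simp add: sum_range_vec_nth[OF nondeg_tri_inj[OF assms]])
qed

lemma bary_affine_combination:
  assumes "nondeg_tri E"
  shows "(\<Sum>i\<in>UNIV. bary E p $ i) = 1" "(\<Sum>i\<in>UNIV. bary E p $ i *\<^sub>R E$i) = p"
proof -
  have "\<exists>!l::real^3. (\<Sum>i\<in>UNIV. l$i) = 1 \<and> (\<Sum>i\<in>UNIV. l$i *\<^sub>R E$i) = p"
    using bary_exists[OF assms] affine_independent_weights_unique[OF nondeg_tri_inj[OF assms]
        nondeg_tri_affine_independent[OF assms]] by (intro ex_ex1I) auto
  from theI'[OF this] show "(\<Sum>i\<in>UNIV. bary E p $ i) = 1" "(\<Sum>i\<in>UNIV. bary E p $ i *\<^sub>R E$i) = p"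
    unfolding bary_def by blast+
qed

definition homothety_maps :: "real \<Rightarrow> real^2 \<Rightarrow> triangle \<Rightarrow> triangle \<Rightarrow> bool" where
  "homothety_maps d w D E \<longleftrightarrow> d \<noteq> 0 \<and> (\<forall>i. E$i = d *\<^sub>R D$i + w)"

lemma homothety_maps_diff:
  "homothety_maps d w D E \<Longrightarrow> E$i - E$j = d *\<^sub>R (D$i - D$j)"
  unfolding homothety_maps_def by (simp add: algebra_simps)

lemma parallel_tri_homothety:
  assumes E: "nondeg_tri E" and D: "parallel_tri E D"
  obtains d w where "homothety_maps d w D E"
proof -
  have "\<exists>s. D$i - D$j = s *\<^sub>R (E$i - E$j)" for i j
    using D unfolding parallel_tri_def by blast
  then obtain s12 s13 s23 where s12: "D$1 - D$2 = s12 *\<^sub>R (E$1 - E$2)"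
    and s13: "D$1 - D$3 = s13 *\<^sub>R (E$1 - E$3)" and s23: "D$2 - D$3 = s23 *\<^sub>R (E$2 - E$3)"
    by blast
  define l :: "real^3" where "l = vector [s13 - s12, s12 - s23, s23 - s13]"
  have "(\<Sum>i\<in>UNIV. l$i) = 0"
    by (simp add: l_def sum_3)
  moreover have "(\<Sum>i\<in>UNIV. l$i *\<^sub>R E$i) = (D$1 - D$3) - (D$1 - D$2) - (D$2 - D$3)"
    unfolding s12 s13 s23 by (simp add: l_def sum_3 algebra_simps)
  then have "(\<Sum>i\<in>UNIV. l$i *\<^sub>R E$i) = 0"
    by simp
  ultimately have "l = 0"
    by (rule affine_independent_weights_eq_0[OF nondeg_tri_inj[OF E]
          nondeg_tri_affine_independent[OF E]])
  then have "l$1 = 0"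
    by simp
  then have "s12 = s13"
    by (simp add: l_def)
  then have "\<forall>i. D$i = D$1 + s13 *\<^sub>R (E$i - E$1)"
    unfolding forall_3 using s12 s13 by (simp add: algebra_simps)
  then have Di: "D$i = D$1 + s13 *\<^sub>R (E$i - E$1)" for i
    by blast
  have "s13 \<noteq> 0"
  proof
    assume "s13 = 0"
    then have "D$i = D$1" for i
      using Di[of i] by simp
    then have "range (vec_nth D) = {D$1}"
      by auto
    then show False
      using D unfolding parallel_tri_def nondeg_tri_def by simp
  qed
  then have "homothety_maps (1 / s13) (E$1 - (1 / s13) *\<^sub>R D$1) D E"
    unfolding homothety_maps_def by (subst Di) (simp add: algebra_simps)
  then show ?thesis ..
qed

lemma homothety_maps_nondeg_tri:
  assumes E: "nondeg_tri E" and h: "homothety_maps d w D E"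
  shows "nondeg_tri D"
proof -
  have "collinear (range (vec_nth E))" if "collinear (range (vec_nth D))"
  proof -
    from that obtain z where z: "\<forall>i j. \<exists>k. D$i - D$j = k *\<^sub>R z"
      unfolding collinear_def by blast
    have "\<exists>k. E$i - E$j = k *\<^sub>R z" for i j
    proof -
      obtain k where "D$i - D$j = k *\<^sub>R z"
        using z by blast
      then have "E$i - E$j = (d * k) *\<^sub>R z"
        by (simp add: homothety_maps_diff[OF h])
      then show ?thesis ..
    qed
    then show ?thesis
      unfolding collinear_def by blast
  qed
  then show ?thesis
    using E unfolding nondeg_tri_def by blast
qed

lemma homothety_maps_parallel_tri:
  assumes "nondeg_tri E" and h: "homothety_maps d w D E"
  shows "parallel_tri E D"
  unfolding parallel_tri_def
proof (intro conjI allI)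
  show "nondeg_tri D"
    using homothety_maps_nondeg_tri[OF assms] .
  fix i j
  have "D$i - D$j = (1 / d) *\<^sub>R (E$i - E$j)"
    using h unfolding homothety_maps_diff[OF h] homothety_maps_def by simp
  then show "\<exists>s. D$i - D$j = s *\<^sub>R (E$i - E$j)" ..
qed

lemma tri_ratio_homothety:
  assumes h: "homothety_maps d w D E" and D: "nondeg_tri D"
  shows "tri_ratio E D = d"
  unfolding tri_ratio_def
proof (rule the_equality)
  show "d \<noteq> 0 \<and> (\<exists>w. \<forall>i. E$i = d *\<^sub>R D$i + w)"
    using h unfolding homothety_maps_def by blast
next
  fix d' assume "d' \<noteq> 0 \<and> (\<exists>w. \<forall>i. E$i = d' *\<^sub>R D$i + w)"
  then obtain w' where "homothety_maps d' w' D E"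
    unfolding homothety_maps_def by blast
  then have "(d' - d) *\<^sub>R (D$1 - D$2) = 0"
    using homothety_maps_diff[OF h, of 1 2] homothety_maps_diff[of d' w' D E 1 2]
    by (simp add: scaleR_left_diff_distrib)
  moreover have "D$1 \<noteq> D$2"
    using nondeg_tri_distinct[OF D] by blast
  ultimately show "d' = d"
    by simp
qed

lemma centroid_homothety:
  "homothety_maps d w D E \<Longrightarrow> centroid E = d *\<^sub>R centroid D + w"
  unfolding homothety_maps_def centroid_def sum_3 by (simp add: vec_eq_iff algebra_simps)

lemma tri_delta_homothety:
  assumes E: "nondeg_tri E" and h: "homothety_maps d w D E"
  shows "(\<Sum>i\<in>UNIV. tri_delta E D $ i) = d"
    and "(\<Sum>i\<in>UNIV. tri_delta E D $ i *\<^sub>R E$i) = centroid E - w"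
proof -
  have delta: "tri_delta E D = d *\<^sub>R bary E (centroid D)"
    unfolding tri_delta_def tri_ratio_homothety[OF h homothety_maps_nondeg_tri[OF E h]] ..
  show "(\<Sum>i\<in>UNIV. tri_delta E D $ i) = d"
    using bary_affine_combination(1)[OF E] by (simp add: delta sum_distrib_left[symmetric])
  have "(\<Sum>i\<in>UNIV. tri_delta E D $ i *\<^sub>R E$i) =
      d *\<^sub>R (\<Sum>i\<in>UNIV. bary E (centroid D) $ i *\<^sub>R E$i)"
    by (simp add: delta scaleR_sum_right)
  also have "\<dots> = d *\<^sub>R centroid D"
    using bary_affine_combination(2)[OF E] by simp
  also have "\<dots> = centroid E - w"
    using centroid_homothety[OF h] by simp
  finally show "(\<Sum>i\<in>UNIV. tri_delta E D $ i *\<^sub>R E$i) = centroid E - w" .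
qed

lemma line_translate: "x \<in> line p q \<Longrightarrow> x + t *\<^sub>R (q - p) \<in> line p q"
  unfolding line_def by (auto simp: algebra_simps intro: exI[of _ "_ + t"])

lemma affine_combination_in_line:
  assumes "a + b \<noteq> 0"
  shows "(1 / (a + b)) *\<^sub>R (a *\<^sub>R p + b *\<^sub>R q) \<in> line p q"
proof -
  have "(1 / (a + b)) *\<^sub>R (a *\<^sub>R p + b *\<^sub>R q) = p + (b / (a + b)) *\<^sub>R (q - p)"
    using assms by (simp add: vec_eq_iff field_simps)
  then show ?thesis
    unfolding line_def by blast
qed

lemma presum_vertex_homothety:
  assumes hA: "homothety_maps dA wA A E" and hB: "homothety_maps dB wB B E"
    and ne: "A$i \<noteq> B$j" and c: "line (A$i) (B$j) \<inter> line (A$j) (B$i) = {c}"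
  shows "dA + dB \<noteq> 0" and "(dA + dB) *\<^sub>R c = E$i + E$j - (wA + wB)"
proof -
  have p: "dA *\<^sub>R A$x + dB *\<^sub>R B$y = E$x + E$y - (wA + wB)" for x y
    using hA hB unfolding homothety_maps_def by (simp add: algebra_simps)
  have p': "dA *\<^sub>R A$j + dB *\<^sub>R B$i = E$i + E$j - (wA + wB)"
    using p[of j i] by (simp add: add.commute)
  show s: "dA + dB \<noteq> 0"
  proof
    assume "dA + dB = 0"
    then have "dB = - dA"
      by simp
    then have "dA *\<^sub>R (A$i - B$j) = dA *\<^sub>R A$i + dB *\<^sub>R B$j"
      and "dA *\<^sub>R (A$j - B$i) = dA *\<^sub>R A$j + dB *\<^sub>R B$i"
      by (simp_all add: scaleR_diff_right)
    then have "dA *\<^sub>R (A$i - B$j) = dA *\<^sub>R (A$j - B$i)"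
      unfolding p[of i j] p' by simp
    moreover have "dA \<noteq> 0"
      using hA unfolding homothety_maps_def by simp
    ultimately have "A$i - B$j = A$j - B$i"
      by simp
    then have dir: "B$i - A$j = B$j - A$i" \<comment> \<open>the two lines are parallel\<close>
      by (simp add: algebra_simps)
    have "c \<in> line (A$i) (B$j)" "c \<in> line (A$j) (B$i)"
      using c by auto
    then have "c + (B$j - A$i) \<in> line (A$i) (B$j) \<inter> line (A$j) (B$i)"
      using line_translate[of c _ _ 1] dir by (metis IntI scaleR_one)
    then have "c + (B$j - A$i) = c"
      using c by blast
    then show False
      using ne by simp
  qed
  have "(1 / (dA + dB)) *\<^sub>R (E$i + E$j - (wA + wB)) \<in> line (A$i) (B$j)"
    using affine_combination_in_line[OF s, of "A$i" "B$j"] by (simp add: p)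
  moreover have "(1 / (dA + dB)) *\<^sub>R (E$i + E$j - (wA + wB)) \<in> line (A$j) (B$i)"
    using affine_combination_in_line[OF s, of "A$j" "B$i"] by (simp add: p')
  ultimately have "(1 / (dA + dB)) *\<^sub>R (E$i + E$j - (wA + wB)) = c"
    using c by blast
  then show "(dA + dB) *\<^sub>R c = E$i + E$j - (wA + wB)"
    using s by auto
qed

lemma sum_UNIV_3_distinct:
  fixes f :: "3 \<Rightarrow> 'a::comm_monoid_add"
  shows "distinct [i, j, k] \<Longrightarrow> sum f UNIV = f i + f j + f k"
  using exhaust_3[of i] exhaust_3[of j] exhaust_3[of k] by (auto simp: sum_3 algebra_simps)

lemma ex_distinct_3: "\<exists>i j. distinct [i, j, k::3]"
proof -
  have "distinct [2, 3, 1::3]" "distinct [1, 3, 2::3]" "distinct [1, 2, 3::3]"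
    by simp_all
  then show ?thesis
    using exhaust_3[of k] by blast
qed

lemma tri_sum_homothety:
  assumes hA: "homothety_maps dA wA A E" and hB: "homothety_maps dB wB B E"
    and "is_tri_sum A B S"
  shows "homothety_maps (dA + dB) (wA + wB - centroid E) S E"
proof -
  obtain C where C: "is_presum A B C" and S: "S = (\<chi> k. 2 *\<^sub>R centroid C - C$k)"
    using assms(3) unfolding is_tri_sum_def by blast
  have vertex: "A$i \<noteq> B$j \<and> line (A$i) (B$j) \<inter> line (A$j) (B$i) = {C$k}"
    if "distinct [i, j, k]" for i j k
    using C that unfolding is_presum_def by blast
  have s: "dA + dB \<noteq> 0"
    using presum_vertex_homothety(1)[OF hA hB] vertex[of 1 2 3] by auto
  have Ck: "(dA + dB) *\<^sub>R C$k = 3 *\<^sub>R centroid E - E$k - (wA + wB)" for k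
  proof -
    obtain i j where ijk: "distinct [i, j, k]"
      using ex_distinct_3 by blast
    have "(dA + dB) *\<^sub>R C$k = E$i + E$j - (wA + wB)"
      using presum_vertex_homothety(2)[OF hA hB] vertex[OF ijk] by blast
    also have "E$i + E$j = 3 *\<^sub>R centroid E - E$k"
      unfolding centroid_def sum_UNIV_3_distinct[OF ijk] by simp
    finally show ?thesis .
  qed
  have "(dA + dB) *\<^sub>R centroid C = (1/3) *\<^sub>R (\<Sum>k\<in>UNIV. (dA + dB) *\<^sub>R C$k)"
    unfolding centroid_def by (simp add: scaleR_sum_right)
  also have "\<dots> = (1/3) *\<^sub>R (\<Sum>k\<in>UNIV. 3 *\<^sub>R centroid E - E$k - (wA + wB))"
    by (simp add: Ck)
  also have "\<dots> = 2 *\<^sub>R centroid E - (wA + wB)"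
    by (simp add: centroid_def sum_3 vec_eq_iff algebra_simps)
  finally have centroid_C: "(dA + dB) *\<^sub>R centroid C = 2 *\<^sub>R centroid E - (wA + wB)" .
  have "E$k = (dA + dB) *\<^sub>R S$k + (wA + wB - centroid E)" for k
  proof -
    have "(dA + dB) *\<^sub>R S$k = 2 *\<^sub>R ((dA + dB) *\<^sub>R centroid C) - (dA + dB) *\<^sub>R C$k"
      by (simp add: S algebra_simps)
    also have "\<dots> = E$k - (wA + wB - centroid E)"
      unfolding centroid_C Ck by (simp add: vec_eq_iff algebra_simps)
    finally show ?thesis
      by simp
  qed
  with s show ?thesis
    unfolding homothety_maps_def by blast
qed

lemma parallel_tri_sum:
  assumes E: "nondeg_tri E" and "parallel_tri E A" "parallel_tri E B" "is_tri_sum A B S"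
  shows "parallel_tri E S" and "tri_delta E S = tri_delta E A + tri_delta E B"
proof -
  obtain dA wA where hA: "homothety_maps dA wA A E"
    using parallel_tri_homothety[OF E assms(2)] .
  obtain dB wB where hB: "homothety_maps dB wB B E"
    using parallel_tri_homothety[OF E assms(3)] .
  have hS: "homothety_maps (dA + dB) (wA + wB - centroid E) S E"
    using tri_sum_homothety[OF hA hB assms(4)] .
  show "parallel_tri E S"
    using homothety_maps_parallel_tri[OF E hS] .
  show "tri_delta E S = tri_delta E A + tri_delta E B"
  proof (rule affine_independent_weights_unique[OF nondeg_tri_inj[OF E]
        nondeg_tri_affine_independent[OF E]])
    show "(\<Sum>i\<in>UNIV. tri_delta E S $ i) = (\<Sum>i\<in>UNIV. (tri_delta E A + tri_delta E B) $ i)"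
      by (simp add: sum.distrib tri_delta_homothety(1)[OF E hA] tri_delta_homothety(1)[OF E hB]
          tri_delta_homothety(1)[OF E hS])
    have "(\<Sum>i\<in>UNIV. tri_delta E S $ i *\<^sub>R E$i) = (centroid E - wA) + (centroid E - wB)"
      by (simp add: tri_delta_homothety(2)[OF E hS] algebra_simps)
    also have "\<dots> = (\<Sum>i\<in>UNIV. (tri_delta E A + tri_delta E B) $ i *\<^sub>R E$i)"
      by (simp add: scaleR_add_left sum.distrib tri_delta_homothety(2)[OF E hA]
          tri_delta_homothety(2)[OF E hB])
    finally show "(\<Sum>i\<in>UNIV. tri_delta E S $ i *\<^sub>R E$i) =
        (\<Sum>i\<in>UNIV. (tri_delta E A + tri_delta E B) $ i *\<^sub>R E$i)" .
  qed
qed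

theorem corollary1:
  fixes E :: triangle
  assumes "nondeg_tri E"
  shows "\<exists>op :: real^3 \<Rightarrow> real^3 \<Rightarrow> real^3.
           (\<forall>x y. op x y = op y x) \<and>
           (\<forall>x y z. op (op x y) z = op x (op y z)) \<and>
           (\<forall>A B S. parallel_tri E A \<and> parallel_tri E B \<and> is_tri_sum A B S \<longrightarrow>
               parallel_tri E S \<and> tri_delta E S = op (tri_delta E A) (tri_delta E B)) \<and>
           (\<exists>\<phi> :: real^3 \<Rightarrow> real^3. bij \<phi> \<and> (\<forall>x y. \<phi> (op x y) = \<phi> x + \<phi> y))"
proof (intro exI[of _ "(+)"] conjI allI impI)
  fix A B S
  assume "parallel_tri E A \<and> parallel_tri E B \<and> is_tri_sum A B S"
  then show "parallel_tri E S" and "tri_delta E S = tri_delta E A + tri_delta E B"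
    using parallel_tri_sum[OF assms] by blast+
next
  show "\<exists>\<phi> :: real^3 \<Rightarrow> real^3. bij \<phi> \<and> (\<forall>x y. \<phi> (x + y) = \<phi> x + \<phi> y)"
    by (intro exI[of _ id]) simp
qed (simp_all add: add.commute add.assoc)

end
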